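(* Let $f:\mathbb{R}^d\to\mathbb{R}$ be convex, and suppose there exist $\boldsymbol x^\star\in\mathbb{R}^d$, $\rho>0$ and $r>0$ such that $f$ is twice differentiable on $B(\boldsymbol x^\star,r)$ with $\nabla^2f(\boldsymbol x)\succeq\rho\boldsymbol I$ for all $\boldsymbol x\in B(\boldsymbol x^\star,r)$. Then $$f(\boldsymbol x)\ge f(\boldsymbol x^\star)+\langle\nabla f(\boldsymbol x^\star),\boldsymbol x-\boldsymbol x^\star\rangle+\rho\,H(\|\boldsymbol x-\boldsymbol x^\star\|_2),\qquad\forall\boldsymbol x\in\mathbb{R}^d,$$ where $H(x)=x^2/2$ if $0\le x\le r$ and $H(x)=r(x-r/2)$ if $x>r$.
   Context: $B(\boldsymbol x,r)$ is the closed Euclidean ball. *)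

theory Defs
  imports "HOL-Analysis.Analysis"
begin

definition grad :: "('a::euclidean_space \<Rightarrow> real) \<Rightarrow> 'a \<Rightarrow> 'a" where
  "grad f x = (\<Sum>b\<in>Basis. frechet_derivative f (at x) b *\<^sub>R b)"

definition twice_differentiable_at :: "('a::euclidean_space \<Rightarrow> real) \<Rightarrow> 'a \<Rightarrow> bool" where
  "twice_differentiable_at f x \<longleftrightarrow>
     (\<forall>\<^sub>F y in nhds x. f differentiable (at y)) \<and> grad f differentiable (at x)"

definition hessian :: "('a::euclidean_space \<Rightarrow> real) \<Rightarrow> 'a \<Rightarrow> 'a \<Rightarrow> 'a" where
  "hessian f x = frechet_derivative (grad f) (at x)"

definition Hfun :: "real \<Rightarrow> real \<Rightarrow> real" where
  "Hfun r t = (if t \<le> r then t\<^sup>2 / 2 else r * (t - r / 2))"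

end

theory Submission
  imports Defs
begin

text \<open>Along a unit direction u, g(s) = f(xs + s u) is a convex function of one variable
  with g'' \<ge> \<rho> on [0, r]. Integrating twice gives g(s) \<ge> g(0) + g'(0) s + \<rho> s^2/2 there;
  beyond r, convexity keeps g above its tangent at r, whose slope is at least g'(0) + \<rho> r,
  and this yields the linear branch of H.\<close>

lemma has_derivative_grad:
  fixes f :: "'a::euclidean_space \<Rightarrow> real"
  assumes "f differentiable (at y)"
  shows "(f has_derivative (\<lambda>v. grad f y \<bullet> v)) (at y)"
proof -
  let ?D = "frechet_derivative f (at y)"
  have D: "(f has_derivative ?D) (at y)"
    using assms frechet_derivative_works by blast
  have "?D v = grad f y \<bullet> v" for v
  proof -
    have "?D v = ?D (\<Sum>b\<in>Basis. (v \<bullet> b) *\<^sub>R b)"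
      by (simp add: euclidean_representation)
    also have "\<dots> = (\<Sum>b\<in>Basis. (v \<bullet> b) * ?D b)"
      using has_derivative_linear[OF D] by (simp add: linear_sum linear_scale)
    also have "\<dots> = grad f y \<bullet> v"
      unfolding grad_def inner_sum_left by (simp add: inner_commute mult.commute)
    finally show ?thesis .
  qed
  then have "?D = (\<lambda>v. grad f y \<bullet> v)"
    by (simp add: fun_eq_iff)
  with D show ?thesis
    by simp
qed

lemma has_real_derivative_along_line:
  fixes g :: "'a::real_normed_vector \<Rightarrow> real"
  assumes "(g has_derivative D) (at (a + s *\<^sub>R u))"
  shows "((\<lambda>s. g (a + s *\<^sub>R u)) has_real_derivative D u) (at s)"
proof -
  have "((\<lambda>s. a + s *\<^sub>R u) has_derivative (\<lambda>h. h *\<^sub>R u)) (at s)"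
    by (auto intro!: derivative_eq_intros)
  from has_derivative_compose[OF this assms]
  have "((\<lambda>s. g (a + s *\<^sub>R u)) has_derivative (\<lambda>h. h * D u)) (at s)"
    using linear_scale[OF has_derivative_linear[OF assms]] by (simp add: o_def)
  moreover have "(\<lambda>h. h * D u) = (*) (D u)"
    by (simp add: fun_eq_iff)
  ultimately show ?thesis
    by (simp add: has_field_derivative_def)
qed

lemma twice_differentiable_atD:
  assumes "twice_differentiable_at f x"
  shows "f differentiable (at x)" and "(grad f has_derivative hessian f x) (at x)"
  using assms eventually_nhds_x_imp_x frechet_derivative_works
  unfolding twice_differentiable_at_def hessian_def by blast+

lemma has_real_derivative_grad_along_line:
  fixes f :: "'a::euclidean_space \<Rightarrow> real"
  assumes "f differentiable (at (a + s *\<^sub>R u))"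
  shows "((\<lambda>s. f (a + s *\<^sub>R u)) has_real_derivative grad f (a + s *\<^sub>R u) \<bullet> u) (at s)"
  using has_real_derivative_along_line[OF has_derivative_grad[OF assms]] .

lemma has_real_derivative_hessian_along_line:
  fixes f :: "'a::euclidean_space \<Rightarrow> real"
  assumes "(grad f has_derivative hessian f (a + s *\<^sub>R u)) (at (a + s *\<^sub>R u))"
  shows "((\<lambda>s. grad f (a + s *\<^sub>R u) \<bullet> u) has_real_derivative u \<bullet> hessian f (a + s *\<^sub>R u) u) (at s)"
proof -
  have "((\<lambda>y. grad f y \<bullet> u) has_derivative (\<lambda>v. hessian f (a + s *\<^sub>R u) v \<bullet> u)) (at (a + s *\<^sub>R u))"
    using assms by (auto intro!: derivative_eq_intros)
  from has_real_derivative_along_line[OF this] show ?thesis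
    by (simp add: inner_commute)
qed

lemma convex_on_along_line:
  assumes "convex_on UNIV f"
  shows "convex_on UNIV (\<lambda>s::real. f (a + s *\<^sub>R u))"
proof (rule convex_onI)
  fix t x y :: real
  assume "0 < t" "t < 1"
  have "a + ((1 - t) * x + t * y) *\<^sub>R u = (1 - t) *\<^sub>R (a + x *\<^sub>R u) + t *\<^sub>R (a + y *\<^sub>R u)"
    by (simp add: algebra_simps)
  with convex_onD[OF assms, of t] \<open>0 < t\<close> \<open>t < 1\<close>
  show "f (a + ((1 - t) *\<^sub>R x + t *\<^sub>R y) *\<^sub>R u) \<le> (1 - t) * f (a + x *\<^sub>R u) + t * f (a + y *\<^sub>R u)"
    by simp
qed simp

lemma increment_le_increment_if_DERIV_le:
  fixes h k :: "real \<Rightarrow> real"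
  assumes "a \<le> b"
    and "\<And>z. a \<le> z \<Longrightarrow> z \<le> b \<Longrightarrow> (h has_real_derivative h' z) (at z)"
    and "\<And>z. a \<le> z \<Longrightarrow> z \<le> b \<Longrightarrow> (k has_real_derivative k' z) (at z)"
    and "\<And>z. a \<le> z \<Longrightarrow> z \<le> b \<Longrightarrow> h' z \<le> k' z"
  shows "h b - h a \<le> k b - k a"
proof -
  have "(\<lambda>z. k z - h z) a \<le> (\<lambda>z. k z - h z) b"
    by (rule deriv_nonneg_imp_mono[where g' = "\<lambda>z. k' z - h' z"])
      (use assms in \<open>auto intro!: derivative_eq_intros\<close>)
  then show ?thesis by simp
qed

lemma convex_real_ge_tangent_plus_Hfun:
  fixes g g' g'' :: "real \<Rightarrow> real"
  assumes convex: "convex_on UNIV g" and "0 \<le> r" "0 \<le> t"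
    and g': "\<And>s. 0 \<le> s \<Longrightarrow> s \<le> r \<Longrightarrow> (g has_real_derivative g' s) (at s)"
    and g'': "\<And>s. 0 \<le> s \<Longrightarrow> s \<le> r \<Longrightarrow> (g' has_real_derivative g'' s) (at s)"
    and curv: "\<And>s. 0 \<le> s \<Longrightarrow> s \<le> r \<Longrightarrow> \<rho> \<le> g'' s"
  shows "g t \<ge> g 0 + g' 0 * t + \<rho> * Hfun r t"
proof -
  have slope: "g' s \<ge> g' 0 + \<rho> * s" if "0 \<le> s" "s \<le> r" for s
  proof -
    have "\<rho> * s - \<rho> * 0 \<le> g' s - g' 0"
      by (rule increment_le_increment_if_DERIV_le[where h' = "\<lambda>_. \<rho>" and k' = g''])
        (use that g'' curv in \<open>auto intro!: derivative_eq_intros\<close>)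
    then show ?thesis by simp
  qed
  have quadratic: "g s \<ge> g 0 + g' 0 * s + \<rho> * s\<^sup>2 / 2" if "0 \<le> s" "s \<le> r" for s
  proof -
    have "(g' 0 * s + \<rho> * s\<^sup>2 / 2) - (g' 0 * 0 + \<rho> * 0\<^sup>2 / 2) \<le> g s - g 0"
      by (rule increment_le_increment_if_DERIV_le[where h' = "\<lambda>z. g' 0 + \<rho> * z" and k' = g'])
        (use that g' slope in \<open>auto intro!: derivative_eq_intros\<close>)
    then show ?thesis by simp
  qed
  show ?thesis
  proof (cases "t \<le> r")
    case True
    then show ?thesis using quadratic[of t] \<open>0 \<le> t\<close> by (simp add: Hfun_def)
  next
    case False
    have "g t - g r \<ge> g' r * (t - r)"
      using convex_on_imp_above_tangent[OF convex] g'[of r] \<open>0 \<le> r\<close> by simp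
    moreover have "g' r * (t - r) \<ge> (g' 0 + \<rho> * r) * (t - r)"
      using slope[of r] False \<open>0 \<le> r\<close> by (intro mult_right_mono) auto
    ultimately show ?thesis
      using quadratic[of r] False \<open>0 \<le> r\<close>
      by (simp add: Hfun_def algebra_simps power2_eq_square)
  qed
qed

theorem lemmaE5:
  fixes f :: "'a::euclidean_space \<Rightarrow> real" and xs :: 'a and \<rho> r :: real
  assumes "convex_on UNIV f"
    and "\<rho> > 0" and "r > 0"
    and "\<forall>x\<in>cball xs r. twice_differentiable_at f x"
    and "\<forall>x\<in>cball xs r. \<forall>v. v \<bullet> hessian f x v \<ge> \<rho> * (v \<bullet> v)"
  shows "\<forall>x. f x \<ge> f xs + grad f xs \<bullet> (x - xs) + \<rho> * Hfun r (norm (x - xs))"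
proof
  fix x
  show "f x \<ge> f xs + grad f xs \<bullet> (x - xs) + \<rho> * Hfun r (norm (x - xs))"
  proof (cases "x = xs")
    case True
    with \<open>r > 0\<close> show ?thesis by (simp add: Hfun_def)
  next
    case False
    define t where "t = norm (x - xs)"
    define u where "u = (1 / t) *\<^sub>R (x - xs)"
    have "t > 0" "norm u = 1" and x_eq: "xs + t *\<^sub>R u = x"
      using False by (simp_all add: t_def u_def)
    have "f (xs + t *\<^sub>R u) \<ge> f (xs + 0 *\<^sub>R u) + (grad f (xs + 0 *\<^sub>R u) \<bullet> u) * t + \<rho> * Hfun r t"
    proof (rule convex_real_ge_tangent_plus_Hfun[where g'' = "\<lambda>s. u \<bullet> hessian f (xs + s *\<^sub>R u) u"])
      fix s assume "0 \<le> s" "s \<le> r"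
      with \<open>norm u = 1\<close> have y: "xs + s *\<^sub>R u \<in> cball xs r"
        by (simp add: dist_norm)
      with assms(4) twice_differentiable_atD
      show "((\<lambda>s. f (xs + s *\<^sub>R u)) has_real_derivative grad f (xs + s *\<^sub>R u) \<bullet> u) (at s)"
        and "((\<lambda>s. grad f (xs + s *\<^sub>R u) \<bullet> u) has_real_derivative u \<bullet> hessian f (xs + s *\<^sub>R u) u) (at s)"
        by (blast intro: has_real_derivative_grad_along_line has_real_derivative_hessian_along_line)+
      from assms(5) y \<open>norm u = 1\<close> show "\<rho> \<le> u \<bullet> hessian f (xs + s *\<^sub>R u) u"
        by (metis mult.right_neutral norm_eq_1)
    qed (use convex_on_along_line[OF assms(1)] \<open>r > 0\<close> \<open>t > 0\<close> in simp_all)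
    moreover have "grad f xs \<bullet> (x - xs) = (grad f xs \<bullet> u) * t"
      unfolding x_eq[symmetric] by simp
    ultimately show ?thesis
      unfolding t_def[symmetric] using x_eq by simp
  qed
qed

end
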